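(* Let $X$ be a $k$-regular bipartite graph on $n$ vertices with both parts of size $n/2$, let $\lambda_2$ be the second largest eigenvalue of its adjacency matrix, and suppose every pair of distinct vertices of $X$ has at most $q$ common neighbours. Then $\mathrm{motion}(X)\geq\frac{k-|\lambda_2|-q}{2k}\,n$.
   Context: The motion $\mathrm{motion}(X)$ of a graph is the minimum, over non-identity automorphisms $\sigma$ of $X$, of the number of vertices not fixed by $\sigma$ (taken to be $+\infty$ if the automorphism group is trivial). *)

theory Defs
  imports "Jordan_Normal_Form.Char_Poly" "HOL-Library.Extended_Real"
begin

definition simple_graph :: "nat \<Rightarrow> (nat \<Rightarrow> nat \<Rightarrow> bool) \<Rightarrow> bool" where
  "simple_graph n E \<longleftrightarrow> (\<forall>u v. E u v \<longrightarrow> u < n \<and> v < n \<and> u \<noteq> v \<and> E v u)"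

definition neighbours :: "nat \<Rightarrow> (nat \<Rightarrow> nat \<Rightarrow> bool) \<Rightarrow> nat \<Rightarrow> nat set" where
  "neighbours n E v = {w. w < n \<and> E v w}"

definition regular :: "nat \<Rightarrow> (nat \<Rightarrow> nat \<Rightarrow> bool) \<Rightarrow> nat \<Rightarrow> bool" where
  "regular n E k \<longleftrightarrow> (\<forall>v<n. card (neighbours n E v) = k)"

definition balanced_bipartite :: "nat \<Rightarrow> (nat \<Rightarrow> nat \<Rightarrow> bool) \<Rightarrow> bool" where
  "balanced_bipartite n E \<longleftrightarrow> (\<exists>A. A \<subseteq> {0..<n} \<and> 2 * card A = n \<and>
      (\<forall>u v. E u v \<longrightarrow> (u \<in> A \<longleftrightarrow> v \<notin> A)))"

definition adj_matrix :: "nat \<Rightarrow> (nat \<Rightarrow> nat \<Rightarrow> bool) \<Rightarrow> real mat" where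
  "adj_matrix n E = mat n n (\<lambda>(i, j). if E i j then 1 else 0)"

definition eigenvalue_mset :: "real mat \<Rightarrow> real multiset" where
  "eigenvalue_mset M = (\<Sum>x\<in>{x. poly (char_poly M) x = 0}. replicate_mset (order x (char_poly M)) x)"

definition eigenvalues_desc :: "real mat \<Rightarrow> real list" where
  "eigenvalues_desc M = rev (sorted_list_of_multiset (eigenvalue_mset M))"

definition lambda2 :: "real mat \<Rightarrow> real" where
  "lambda2 M = eigenvalues_desc M ! 1"

definition automorphism :: "nat \<Rightarrow> (nat \<Rightarrow> nat \<Rightarrow> bool) \<Rightarrow> (nat \<Rightarrow> nat) \<Rightarrow> bool" where
  "automorphism n E \<sigma> \<longleftrightarrow> bij_betw \<sigma> {0..<n} {0..<n} \<and>
      (\<forall>u<n. \<forall>v<n. E u v \<longleftrightarrow> E (\<sigma> u) (\<sigma> v))"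

text \<open>Motion: minimum number of moved vertices over non-identity automorphisms;
  infinity if the automorphism group is trivial (Inf of the empty set of enat).\<close>
definition motion :: "nat \<Rightarrow> (nat \<Rightarrow> nat \<Rightarrow> bool) \<Rightarrow> enat" where
  "motion n E = Inf {enat (card {v. v < n \<and> \<sigma> v \<noteq> v}) | \<sigma>.
      automorphism n E \<sigma> \<and> (\<exists>v<n. \<sigma> v \<noteq> v)}"

end

theory Submission
  imports Defs "Jordan_Normal_Form.Jordan_Normal_Form_Existence"
    "Jordan_Normal_Form.Jordan_Normal_Form_Uniqueness"
begin

text \<open>Let \<open>\<sigma>\<close> be a non-trivial automorphism with support \<open>S\<close>, \<open>m = |S|\<close>. A neighbour of a moved
  vertex \<open>r\<close> that \<open>\<sigma>\<close> fixes is a common neighbour of \<open>r\<close> and \<open>\<sigma> r\<close>, so every vertex of \<open>S\<close>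
  has at least \<open>k - q\<close> neighbours inside \<open>S\<close>. On the plane spanned by the all-ones vector and
  the indicator of \<open>S\<close> the adjacency form is then at least \<open>(k - q - k m / n)\<close> times the squared
  norm, so by the Courant-Fischer principle \<open>\<lambda>\<^sub>2 \<ge> k - q - k m / n\<close>, i.e.
  \<open>m \<ge> (k - q - \<lambda>\<^sub>2) n / k\<close>. Courant-Fischer is derived from an eigenbasis of the
  adjacency matrix, which exists because a real symmetric matrix has real eigenvalues and only
  Jordan blocks of size one.\<close>

section \<open>Diagonalising real symmetric matrices\<close>

lemma mat_vec_index_sum:
  fixes C :: "'a::comm_semiring_0 mat"
  assumes "C \<in> carrier_mat n n" "x \<in> carrier_vec n" "i < n"
  shows "(C *\<^sub>v x) $ i = (\<Sum>j<n. C $$ (i, j) * x $ j)"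
  using assms by (simp add: mult_mat_vec_def scalar_prod_def lessThan_atLeast0)

lemma sym_mat_eigenvalue_real:
  fixes A :: "real mat" and v :: "complex vec"
  assumes A: "A \<in> carrier_mat n n" and sym: "\<forall>i<n. \<forall>j<n. A $$ (i, j) = A $$ (j, i)"
    and v: "v \<in> carrier_vec n" "v \<noteq> 0\<^sub>v n"
    and ev: "map_mat complex_of_real A *\<^sub>v v = e \<cdot>\<^sub>v v"
  shows "Im e = 0"
proof -
  have row: "(\<Sum>j<n. complex_of_real (A $$ (i, j)) * v $ j) = e * v $ i" if i: "i < n" for i
    using arg_cong[OF ev, of "\<lambda>w. w $ i"] mat_vec_index_sum[of "map_mat complex_of_real A" n v i] A v i
    by simp
  define s where "s = (\<Sum>i<n. cnj (v $ i) * (\<Sum>j<n. complex_of_real (A $$ (i, j)) * v $ j))"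
  define N where "N = (\<Sum>i<n. (cmod (v $ i))\<^sup>2)"
  have "s = e * (\<Sum>i<n. cnj (v $ i) * v $ i)"
    unfolding s_def using row by (simp add: sum_distrib_left mult_ac)
  also have "(\<Sum>i<n. cnj (v $ i) * v $ i) = complex_of_real N"
    unfolding N_def of_real_sum
    by (intro sum.cong refl) (metis complex_norm_square mult.commute of_real_power)
  finally have sN: "s = e * complex_of_real N" .
  have "cnj s = (\<Sum>j<n. \<Sum>i<n. v $ i * (complex_of_real (A $$ (i, j)) * cnj (v $ j)))"
    unfolding s_def by (subst sum.swap) (simp add: sum_distrib_left)
  also have "\<dots> = s"
    unfolding s_def using sym by (intro sum.cong refl) (simp add: sum_distrib_left mult_ac)
  finally have s_real: "cnj s = s" .
  obtain i where i: "i < n" "v $ i \<noteq> 0"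
    using v by (metis eq_vecI carrier_vecD index_zero_vec)
  have "0 < (cmod (v $ i))\<^sup>2" using i by simp
  also have "\<dots> \<le> N" unfolding N_def using i by (intro member_le_sum) auto
  finally have "N \<noteq> 0" by simp
  moreover have "cnj e * complex_of_real N = e * complex_of_real N"
    using s_real sN by (metis complex_cnj_complex_of_real complex_cnj_mult)
  ultimately have "cnj e = e" by simp
  thus ?thesis by (metis Reals_cnj_iff complex_is_Real_iff)
qed

lemma sym_mat_char_poly_splits:
  fixes A :: "real mat"
  assumes A: "A \<in> carrier_mat n n" and sym: "\<forall>i<n. \<forall>j<n. A $$ (i, j) = A $$ (j, i)"
  obtains as where "char_poly A = (\<Prod>a\<leftarrow>as. [:-a, 1:])"
proof -
  let ?Ac = "map_mat complex_of_real A"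
  have Ac: "?Ac \<in> carrier_mat n n" using A by simp
  obtain es where es: "char_poly ?Ac = (\<Prod>e\<leftarrow>es. [:-e, 1:])"
    using char_poly_factorized[OF Ac] by blast
  have real: "complex_of_real (Re e) = e" if e: "e \<in> set es" for e
  proof -
    have "poly (char_poly ?Ac) e = 0" unfolding es using e
      by (simp add: poly_prod_list prod_list_zero_iff)
    then obtain v where "eigenvector ?Ac v e"
      using eigenvalue_root_char_poly[OF Ac] unfolding eigenvalue_def by blast
    hence "v \<in> carrier_vec n" "v \<noteq> 0\<^sub>v n" "?Ac *\<^sub>v v = e \<cdot>\<^sub>v v"
      unfolding eigenvector_def using A by auto
    from sym_mat_eigenvalue_real[OF A sym this] show ?thesis by (simp add: complex_eq_iff)
  qed
  interpret of_real_poly: map_poly_inj_idom_hom complex_of_real ..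
  have "map_poly complex_of_real (\<Prod>a\<leftarrow>map Re es. [:-a, 1:]) = (\<Prod>e\<leftarrow>es. [:-e, 1:])"
    using real
  proof (induction es)
    case (Cons e es)
    have "map_poly complex_of_real [:-Re e, 1:] = [:-e, 1:]"
      using Cons.prems[of e] by (simp add: map_poly_pCons)
    with Cons show ?case by (simp only: list.map prod_list.Cons comp_def of_real_poly.hom_mult) simp
  qed simp
  also have "\<dots> = map_poly complex_of_real (char_poly A)"
    unfolding es[symmetric] by (rule of_real_hom.char_poly_hom[OF A])
  finally show ?thesis using that[of "map Re es"] by (simp add: of_real_poly.eq_iff comp_def)
qed

lemma sym_mat_kernel_square:
  fixes C :: "real mat"
  assumes C: "C \<in> carrier_mat n n" and sym: "\<forall>i<n. \<forall>j<n. C $$ (i, j) = C $$ (j, i)"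
    and x: "x \<in> carrier_vec n" and z: "C *\<^sub>v (C *\<^sub>v x) = 0\<^sub>v n"
  shows "C *\<^sub>v x = 0\<^sub>v n"
proof -
  define y where "y = C *\<^sub>v x"
  have y: "y \<in> carrier_vec n" unfolding y_def using C x by simp
  have Cy: "(\<Sum>i<n. C $$ (j, i) * y $ i) = 0" if j: "j < n" for j
    using arg_cong[OF z, of "\<lambda>w. w $ j"] mat_vec_index_sum[OF C y j] j unfolding y_def by simp
  have "(\<Sum>i<n. (y $ i)\<^sup>2) = (\<Sum>i<n. \<Sum>j<n. x $ j * (C $$ (i, j) * y $ i))"
    using mat_vec_index_sum[OF C x] unfolding y_def
    by (simp add: power2_eq_square sum_distrib_right mult_ac)
  also have "\<dots> = (\<Sum>j<n. x $ j * (\<Sum>i<n. C $$ (j, i) * y $ i))"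
    using sym by (subst sum.swap) (simp add: sum_distrib_left)
  also have "\<dots> = 0" using Cy by simp
  finally have "\<forall>i<n. y $ i = 0" by (simp add: sum_nonneg_eq_0_iff)
  thus ?thesis using y unfolding y_def[symmetric] by (intro eq_vecI) auto
qed

lemma sum_list_min_2_eq_min_1:
  fixes xs :: "nat list"
  assumes "sum_list (map (min 2) xs) = sum_list (map (min 1) xs)" and "x \<in> set xs"
  shows "x \<le> 1"
  using assms
proof (induction xs)
  case (Cons y xs)
  have "sum_list (map (min 1) xs) \<le> sum_list (map (min 2) xs)"
    by (rule sum_list_mono) simp
  moreover have "min 1 y \<le> min 2 y" by simp
  ultimately have "min 2 y = min 1 y" "sum_list (map (min 2) xs) = sum_list (map (min 1) xs)"
    using Cons.prems(1) by auto
  with Cons show ?case by auto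
qed simp

lemma sym_mat_jordan_blocks_trivial:
  fixes A :: "real mat"
  assumes A: "A \<in> carrier_mat n n" and sym: "\<forall>i<n. \<forall>j<n. A $$ (i, j) = A $$ (j, i)"
    and jnf: "jordan_nf A n_as" and block: "(m, a) \<in> set n_as"
  shows "m = 1"
proof -
  define C where "C = char_matrix A a"
  have C: "C \<in> carrier_mat n n" unfolding C_def using A by simp
  have C_sym: "\<forall>i<n. \<forall>j<n. C $$ (i, j) = C $$ (j, i)"
    unfolding C_def char_matrix_def using A sym by auto
  have "mat_kernel (C * C) = mat_kernel C"
  proof (intro equalityI subsetI)
    fix x assume "x \<in> mat_kernel (C * C)"
    hence "x \<in> carrier_vec n" "C *\<^sub>v (C *\<^sub>v x) = 0\<^sub>v n"
      unfolding mat_kernel_def using C by auto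
    thus "x \<in> mat_kernel C"
      using sym_mat_kernel_square[OF C C_sym] C unfolding mat_kernel_def by auto
  next
    fix x assume "x \<in> mat_kernel C"
    hence "x \<in> carrier_vec n" "C *\<^sub>v x = 0\<^sub>v n" unfolding mat_kernel_def using C by auto
    thus "x \<in> mat_kernel (C * C)"
      using C unfolding mat_kernel_def by (auto simp: assoc_mult_mat_vec[of C n n C n x])
  qed
  hence "dim_gen_eigenspace A a 2 = dim_gen_eigenspace A a 1"
    using C unfolding dim_gen_eigenspace_def kernel_dim_def C_def[symmetric]
    by (simp add: numeral_2_eq_2)
  hence "sum_list (map (min 2) (map fst [(m, e)\<leftarrow>n_as. e = a]))
       = sum_list (map (min 1) (map fst [(m, e)\<leftarrow>n_as. e = a]))"
    unfolding dim_gen_eigenspace[OF jnf] by simp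
  from sum_list_min_2_eq_min_1[OF this] have "m \<le> 1" using block by force
  moreover have "m \<noteq> 0" using jnf block unfolding jordan_nf_def by force
  ultimately show ?thesis by simp
qed

lemma jordan_matrix_diagonal:
  assumes "\<forall>p\<in>set n_as. fst p = 1"
  shows "jordan_matrix n_as = mat (length n_as) (length n_as)
           (\<lambda>(i, j). if i = j then snd (n_as ! i) else (0::'a::{zero,one}))"
  using assms
proof (induction n_as)
  case Nil
  show ?case unfolding jordan_matrix_def by (intro eq_matI) auto
next
  case (Cons p n_as)
  obtain a where p: "p = (1, a)" using Cons.prems by (cases p) auto
  have "sum_list (map fst n_as) = length n_as" using Cons.prems by (induction n_as) auto
  with Cons show ?case unfolding p jordan_matrix_Cons
    by (intro eq_matI) (auto simp: nth_Cons' jordan_block_def)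
qed

lemma sym_mat_diagonalizable:
  fixes A :: "real mat"
  assumes A: "A \<in> carrier_mat n n" and sym: "\<forall>i<n. \<forall>j<n. A $$ (i, j) = A $$ (j, i)"
  obtains ds P Q where "length ds = n" "char_poly A = (\<Prod>a\<leftarrow>ds. [:-a, 1:])"
    "P \<in> carrier_mat n n" "Q \<in> carrier_mat n n" "P * Q = 1\<^sub>m n" "Q * P = 1\<^sub>m n"
    "\<forall>i<n. \<forall>r<n. (\<Sum>j<n. A $$ (r, j) * P $$ (j, i)) = ds ! i * P $$ (r, i)"
proof -
  obtain as where "char_poly A = (\<Prod>a\<leftarrow>as. [:-a, 1:])"
    using sym_mat_char_poly_splits[OF A sym] .
  then obtain n_as where jnf: "jordan_nf A n_as" using jordan_nf_exists[OF A] by blast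
  have blocks: "\<forall>p\<in>set n_as. fst p = 1"
    using sym_mat_jordan_blocks_trivial[OF A sym jnf] by fastforce
  define ds where "ds = map snd n_as"
  have "char_poly A = (\<Prod>(m, a)\<leftarrow>n_as. [:-a, 1:] ^ m)" by (rule jordan_nf_char_poly[OF jnf])
  also have "\<dots> = (\<Prod>a\<leftarrow>ds. [:-a, 1:])" unfolding ds_def using blocks by (induction n_as) auto
  finally have cp: "char_poly A = (\<Prod>a\<leftarrow>ds. [:-a, 1:])" .
  have "length ds = degree (char_poly A)"
    unfolding cp by (rule degree_linear_factors[of uminus ds, simplified, symmetric])
  hence len: "length ds = n" using degree_monic_char_poly[OF A] by simp
  define D where "D = jordan_matrix n_as"
  have D_diag: "D = mat n n (\<lambda>(i, j). if i = j then ds ! i else 0)"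
    using jordan_matrix_diagonal[OF blocks] len unfolding D_def ds_def by (auto intro!: eq_matI)
  from jnf obtain P Q where "similar_mat_wit A D P Q"
    unfolding jordan_nf_def similar_mat_def D_def by blast
  note PQ = similar_mat_witD2[OF A this]
  have D: "D \<in> carrier_mat n n" using PQ(5) .
  have "A * P = P * D * Q * P" using PQ(3) by simp
  also have "\<dots> = P * D * (Q * P)" by (rule assoc_mult_mat) (use PQ in auto)
  also have "\<dots> = P * D" unfolding PQ(2) using PQ(6) D by simp
  finally have AP: "A * P = P * D" .
  have "(\<Sum>j<n. A $$ (r, j) * P $$ (j, i)) = ds ! i * P $$ (r, i)" if "i < n" "r < n" for i r
  proof -
    have "(\<Sum>j<n. A $$ (r, j) * P $$ (j, i)) = (P * D) $$ (r, i)"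
      unfolding AP[symmetric] using A PQ(6) that
      by (simp add: times_mat_def scalar_prod_def lessThan_atLeast0)
    also have "\<dots> = (\<Sum>j\<in>{0..<n}. P $$ (r, j) * (if j = i then ds ! i else 0))"
      using D PQ(6) that unfolding D_diag
      by (simp add: times_mat_def scalar_prod_def cong: if_cong)
    also have "\<dots> = (\<Sum>j\<in>{0..<n}. if j = i then ds ! i * P $$ (r, i) else 0)"
      by (intro sum.cong) auto
    finally show ?thesis using that by simp
  qed
  with that len cp PQ show ?thesis by blast
qed

lemma mat_right_inverse_columns_span:
  fixes P Q :: "real mat" and x :: "nat \<Rightarrow> real"
  assumes P: "P \<in> carrier_mat n n" and Q: "Q \<in> carrier_mat n n" and PQ: "P * Q = 1\<^sub>m n"
  shows "\<exists>c. \<forall>r<n. x r = (\<Sum>i<n. P $$ (r, i) * c i)"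
proof -
  define c where "c = Q *\<^sub>v vec n x"
  have c: "c \<in> carrier_vec n" unfolding c_def using Q by simp
  have "P *\<^sub>v c = vec n x"
    unfolding c_def using P Q by (simp add: assoc_mult_mat_vec[symmetric] PQ)
  hence "\<forall>r<n. x r = (\<Sum>i<n. P $$ (r, i) * c $ i)"
    using mat_vec_index_sum[OF P c] by (metis index_vec)
  thus ?thesis by blast
qed

lemma mat_left_inverse_columns_independent:
  fixes P Q :: "real mat" and c :: "nat \<Rightarrow> real"
  assumes P: "P \<in> carrier_mat n n" and Q: "Q \<in> carrier_mat n n" and QP: "Q * P = 1\<^sub>m n"
    and zero: "\<forall>r<n. (\<Sum>i<n. P $$ (r, i) * c i) = 0"
  shows "\<forall>i<n. c i = 0"
proof -
  have cv: "vec n c \<in> carrier_vec n" by simp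
  have "P *\<^sub>v vec n c = 0\<^sub>v n"
    using zero mat_vec_index_sum[OF P cv] P by (intro eq_vecI) auto
  hence "vec n c = Q *\<^sub>v 0\<^sub>v n"
    using P Q by (metis QP assoc_mult_mat_vec cv one_mult_mat_vec)
  also have "\<dots> = 0\<^sub>v n" using Q by (intro eq_vecI) (auto simp: mult_mat_vec_def)
  finally show ?thesis by (metis index_vec index_zero_vec(1))
qed

section \<open>The second eigenvalue and quadratic forms\<close>

lemma order_prod_linear_factors:
  fixes x :: real
  shows "Polynomial.order x (\<Prod>a\<leftarrow>ds. [:-a, 1:]) = count (mset ds) x"
proof (induction ds)
  case (Cons a ds)
  have "(\<Prod>b\<leftarrow>ds. [:-b, 1:]) \<noteq> (0::real poly)" by (subst prod_list_zero_iff) auto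
  hence "[:-a, 1:] * (\<Prod>b\<leftarrow>ds. [:-b, 1:]) \<noteq> 0"
    by (metis mult_eq_0_iff pCons_eq_0_iff one_neq_zero)
  hence "Polynomial.order x ([:-a, 1:] * (\<Prod>b\<leftarrow>ds. [:-b, 1:]))
      = Polynomial.order x [:-a, 1:] + Polynomial.order x (\<Prod>b\<leftarrow>ds. [:-b, 1:])"
    by (rule order_mult)
  moreover have "Polynomial.order x [:-a, 1:] = (if x = a then 1 else 0)"
    using order_power_n_n[of a 1] by (auto intro: order_0I)
  ultimately show ?case using Cons.IH by simp
qed simp

lemma eigenvalue_mset_linear_factors:
  assumes "char_poly M = (\<Prod>a\<leftarrow>ds. [:-a, 1:])"
  shows "eigenvalue_mset M = mset ds"
proof (rule multiset_eqI)
  fix y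
  have ord: "Polynomial.order x (char_poly M) = count (mset ds) x" for x
    unfolding assms by (rule order_prod_linear_factors)
  have "char_poly M \<noteq> 0" unfolding assms by (auto simp: prod_list_zero_iff)
  hence roots: "{x. poly (char_poly M) x = 0} = set ds"
    using ord order_root[of "char_poly M"] by (auto simp: count_eq_zero_iff)
  have "count (eigenvalue_mset M) y = (\<Sum>x\<in>set ds. if x = y then count (mset ds) y else 0)"
    unfolding eigenvalue_mset_def roots ord by (auto simp: count_sum intro: sum.cong)
  also have "\<dots> = count (mset ds) y" by (simp add: sum.delta' count_eq_zero_iff)
  finally show "count (eigenvalue_mset M) y = count (mset ds) y" .
qed

lemma lambda2_ge:
  assumes "char_poly M = (\<Prod>a\<leftarrow>ds. [:-a, 1:])"
    and two: "2 \<le> card {i. i < length ds \<and> \<mu> \<le> ds ! i}"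
  shows "\<mu> \<le> lambda2 M"
proof -
  define L where "L = sort ds"
  have "card {i. i < length L \<and> \<mu> \<le> L ! i} = length (filter ((\<le>) \<mu>) L)"
    by (simp add: length_filter_conv_card)
  also have "\<dots> = length (filter ((\<le>) \<mu>) ds)"
    unfolding L_def by (metis mset_filter mset_sort size_mset)
  also have "\<dots> = card {i. i < length ds \<and> \<mu> \<le> ds ! i}" by (rule length_filter_conv_card)
  finally have two_L: "2 \<le> card {i. i < length L \<and> \<mu> \<le> L ! i}" using two by simp
  have "card {i. i < length L \<and> \<mu> \<le> L ! i} \<le> card {..<length L}" by (intro card_mono) auto
  hence len: "2 \<le> length L" using two_L by simp
  have "\<mu> \<le> L ! (length L - 2)"
  proof (rule ccontr)
    assume "\<not> \<mu> \<le> L ! (length L - 2)"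
    hence small: "L ! i < \<mu>" if "i \<le> length L - 2" for i
      using sorted_nth_mono[OF _ that, of L] len unfolding L_def by force
    have "{i. i < length L \<and> \<mu> \<le> L ! i} \<subseteq> {length L - 1}"
    proof
      fix i assume "i \<in> {i. i < length L \<and> \<mu> \<le> L ! i}"
      with small[of i] show "i \<in> {length L - 1}" by force
    qed
    from card_mono[OF _ this] two_L show False by simp
  qed
  moreover have "lambda2 M = L ! (length L - 2)"
    unfolding lambda2_def eigenvalues_desc_def eigenvalue_mset_linear_factors[OF assms(1)] L_def
    using len by (simp add: rev_nth numeral_2_eq_2 L_def)
  ultimately show ?thesis by simp
qed

lemma exists_combination_orthogonal:
  fixes u w1 w2 :: "nat \<Rightarrow> real"
  obtains \<alpha> \<beta> where "\<alpha> \<noteq> 0 \<or> \<beta> \<noteq> 0" "(\<Sum>r<n. u r * (\<alpha> * w1 r + \<beta> * w2 r)) = 0"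
proof -
  define s1 where "s1 = (\<Sum>r<n. u r * w1 r)"
  define s2 where "s2 = (\<Sum>r<n. u r * w2 r)"
  have comb: "(\<Sum>r<n. u r * (\<alpha> * w1 r + \<beta> * w2 r)) = \<alpha> * s1 + \<beta> * s2" for \<alpha> \<beta>
    unfolding s1_def s2_def by (simp add: sum.distrib sum_distrib_left algebra_simps)
  show ?thesis
  proof (cases "s1 = 0 \<and> s2 = 0")
    case True
    thus ?thesis using that[of 1 0] comb[of 1 0] by simp
  next
    case False
    thus ?thesis using that[of s2 "- s1"] comb[of s2 "- s1"] by (auto simp: algebra_simps)
  qed
qed

locale real_eigenbasis =
  fixes n :: nat and a p :: "nat \<Rightarrow> nat \<Rightarrow> real" and d :: "nat \<Rightarrow> real"
  assumes symmetric: "\<And>r s. r < n \<Longrightarrow> s < n \<Longrightarrow> a r s = a s r"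
    and eigenvector: "\<And>i r. i < n \<Longrightarrow> r < n \<Longrightarrow> (\<Sum>s<n. a r s * p s i) = d i * p r i"
    and spanning: "\<And>x. \<exists>c. \<forall>r<n. x r = (\<Sum>i<n. p r i * c i)"
    and independent: "\<And>c. \<forall>r<n. (\<Sum>i<n. p r i * c i) = 0 \<Longrightarrow> \<forall>i<n. c i = 0"
begin

definition gram :: "nat \<Rightarrow> nat \<Rightarrow> real" where
  "gram i l = (\<Sum>r<n. p r i * p r l)"

lemma gram_eq_0:
  assumes "i < n" "l < n" "d i \<noteq> d l"
  shows "gram i l = 0"
proof -
  have "d i * gram i l = (\<Sum>r<n. (\<Sum>s<n. a r s * p s i) * p r l)"
    unfolding gram_def using eigenvector assms by (simp add: sum_distrib_left mult.assoc)
  also have "\<dots> = (\<Sum>r<n. \<Sum>s<n. p s i * (a r s * p r l))"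
    by (simp add: sum_distrib_left sum_distrib_right mult_ac)
  also have "\<dots> = (\<Sum>s<n. p s i * (\<Sum>r<n. a s r * p r l))"
    using symmetric by (subst sum.swap) (simp add: sum_distrib_left)
  also have "\<dots> = d l * gram i l"
    unfolding gram_def using eigenvector assms by (simp add: sum_distrib_left mult_ac)
  finally show ?thesis using assms(3) by simp
qed

lemma gram_diag_ne_0:
  assumes i: "i < n"
  shows "gram i i \<noteq> 0"
proof
  assume "gram i i = 0"
  hence "\<forall>r<n. p r i = 0"
    unfolding gram_def by (simp add: sum_nonneg_eq_0_iff flip: power2_eq_square)
  hence "\<forall>r<n. (\<Sum>l<n. p r l * of_bool (l = i)) = 0" using i by simp
  from independent[OF this] i have "of_bool (i = i) = (0::real)" by blast
  thus False by simp
qed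

lemma inner_combination:
  "(\<Sum>r<n. p r j * (\<Sum>i<n. p r i * c i)) = (\<Sum>i<n. c i * gram j i)"
proof -
  have "(\<Sum>r<n. p r j * (\<Sum>i<n. p r i * c i)) = (\<Sum>r<n. \<Sum>i<n. c i * (p r j * p r i))"
    by (simp add: sum_distrib_left mult_ac)
  also have "\<dots> = (\<Sum>i<n. c i * gram j i)"
    unfolding gram_def by (subst sum.swap) (simp add: sum_distrib_left)
  finally show ?thesis .
qed

lemma sum_squares_combination:
  "(\<Sum>r<n. (\<Sum>i<n. p r i * c i)\<^sup>2) = (\<Sum>i<n. \<Sum>l<n. c i * c l * gram i l)"
proof -
  have "(\<Sum>r<n. (\<Sum>i<n. p r i * c i)\<^sup>2) = (\<Sum>r<n. \<Sum>i<n. \<Sum>l<n. c i * c l * (p r i * p r l))"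
    by (simp add: power2_eq_square sum_product mult_ac)
  also have "\<dots> = (\<Sum>i<n. \<Sum>l<n. \<Sum>r<n. c i * c l * (p r i * p r l))"
    by (subst sum.swap) (intro sum.cong refl sum.swap)
  finally show ?thesis unfolding gram_def by (simp add: sum_distrib_left)
qed

lemma quadratic_form_combination:
  assumes x: "\<forall>r<n. x r = (\<Sum>i<n. p r i * c i)"
  shows "(\<Sum>r<n. \<Sum>s<n. x r * a r s * x s) = (\<Sum>i<n. \<Sum>l<n. c i * c l * d l * gram i l)"
proof -
  have image: "(\<Sum>s<n. a r s * x s) = (\<Sum>l<n. p r l * (d l * c l))" if r: "r < n" for r
  proof -
    have "(\<Sum>s<n. a r s * x s) = (\<Sum>s<n. \<Sum>l<n. c l * (a r s * p s l))"
      using x by (intro sum.cong refl) (simp add: sum_distrib_left mult_ac)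
    also have "\<dots> = (\<Sum>l<n. c l * (\<Sum>s<n. a r s * p s l))"
      by (subst sum.swap) (simp add: sum_distrib_left)
    also have "\<dots> = (\<Sum>l<n. p r l * (d l * c l))"
      using eigenvector r by (intro sum.cong refl) simp
    finally show ?thesis .
  qed
  have "(\<Sum>r<n. \<Sum>s<n. x r * a r s * x s) = (\<Sum>r<n. x r * (\<Sum>s<n. a r s * x s))"
    by (simp add: sum_distrib_left mult.assoc)
  also have "\<dots> = (\<Sum>r<n. x r * (\<Sum>l<n. p r l * (d l * c l)))"
    using image by simp
  also have "\<dots> = (\<Sum>r<n. \<Sum>i<n. c i * (p r i * (\<Sum>l<n. p r l * (d l * c l))))"
    using x by (simp add: sum_distrib_right mult_ac)
  also have "\<dots> = (\<Sum>i<n. c i * (\<Sum>r<n. p r i * (\<Sum>l<n. p r l * (d l * c l))))"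
    by (subst sum.swap) (simp add: sum_distrib_left)
  also have "\<dots> = (\<Sum>i<n. c i * (\<Sum>l<n. d l * c l * gram i l))"
    by (simp only: inner_combination mult.assoc)
  finally show ?thesis by (simp add: sum_distrib_left mult_ac)
qed

lemma quadratic_form_less:
  assumes low: "\<forall>i<n. \<mu> \<le> d i \<longrightarrow> c i = 0"
    and x: "\<forall>r<n. x r = (\<Sum>i<n. p r i * c i)" and nonzero: "\<exists>r<n. x r \<noteq> 0"
  shows "(\<Sum>r<n. \<Sum>s<n. x r * a r s * x s) < \<mu> * (\<Sum>r<n. (x r)\<^sup>2)"
proof -
  define f where "f i = (if d i < \<mu> then sqrt (\<mu> - d i) else 0)" for i
  define y where "y r = (\<Sum>i<n. p r i * (f i * c i))" for r
  \<comment> \<open>\<open>gram i l\<close> vanishes unless \<open>d i = d l\<close>, where \<open>f i * f l = \<mu> - d l\<close>\<close>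
  have weight: "c i * c l * (\<mu> - d l) * gram i l = (f i * c i) * (f l * c l) * gram i l"
    if "i < n" "l < n" for i l
  proof (cases "gram i l = 0")
    case False
    hence same: "d i = d l" using gram_eq_0[OF that] by blast
    show ?thesis
    proof (cases "d l < \<mu>")
      case True
      hence "f i * f l = \<mu> - d l" using same unfolding f_def by simp
      moreover have "(f i * c i) * (f l * c l) = c i * c l * (f i * f l)" by (simp only: mult_ac)
      ultimately show ?thesis by simp
    qed (use low that in simp)
  qed simp
  have norm: "(\<Sum>r<n. (x r)\<^sup>2) = (\<Sum>i<n. \<Sum>l<n. c i * c l * gram i l)"
    using x by (simp add: sum_squares_combination)
  have "\<mu> * (\<Sum>r<n. (x r)\<^sup>2) - (\<Sum>r<n. \<Sum>s<n. x r * a r s * x s)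
      = (\<Sum>i<n. \<Sum>l<n. \<mu> * (c i * c l * gram i l) - c i * c l * d l * gram i l)"
    unfolding norm quadratic_form_combination[OF x] by (simp add: sum_distrib_left sum_subtractf)
  also have "\<dots> = (\<Sum>i<n. \<Sum>l<n. c i * c l * (\<mu> - d l) * gram i l)"
    by (intro sum.cong refl) (simp add: algebra_simps)
  also have "\<dots> = (\<Sum>r<n. (y r)\<^sup>2)"
    unfolding y_def sum_squares_combination using weight by (intro sum.cong refl) auto
  finally have gap: "\<mu> * (\<Sum>r<n. (x r)\<^sup>2) - (\<Sum>r<n. \<Sum>s<n. x r * a r s * x s) = (\<Sum>r<n. (y r)\<^sup>2)" .
  have "(\<Sum>r<n. (y r)\<^sup>2) \<noteq> 0"
  proof
    assume "(\<Sum>r<n. (y r)\<^sup>2) = 0"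
    hence "\<forall>r<n. y r = 0" by (simp add: sum_nonneg_eq_0_iff)
    hence fc: "\<forall>i<n. f i * c i = 0" unfolding y_def by (rule independent)
    have c0: "c i = 0" if i: "i < n" for i
    proof (cases "d i < \<mu>")
      case True
      hence "f i \<noteq> 0" unfolding f_def by simp
      moreover have "f i * c i = 0" using fc i by blast
      ultimately show ?thesis by simp
    qed (use low i in simp)
    obtain r where r: "r < n" "x r \<noteq> 0" using nonzero by blast
    have "x r = (\<Sum>i<n. p r i * c i)" using x r by blast
    also have "\<dots> = 0" using c0 by simp
    finally show False using r by simp
  qed
  moreover have "0 \<le> (\<Sum>r<n. (y r)\<^sup>2)" by (simp add: sum_nonneg)
  ultimately show ?thesis using gap by linarith
qed

lemma two_eigenvalues_ge:
  fixes w1 w2 :: "nat \<Rightarrow> real"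
  assumes nonzero: "\<And>\<alpha> \<beta>. \<alpha> \<noteq> 0 \<or> \<beta> \<noteq> 0 \<Longrightarrow> \<exists>r<n. \<alpha> * w1 r + \<beta> * w2 r \<noteq> 0"
    and form: "\<And>\<alpha> \<beta>. \<mu> * (\<Sum>r<n. (\<alpha> * w1 r + \<beta> * w2 r)\<^sup>2)
      \<le> (\<Sum>r<n. \<Sum>s<n. (\<alpha> * w1 r + \<beta> * w2 r) * a r s * (\<alpha> * w1 s + \<beta> * w2 s))"
  shows "2 \<le> card {i. i < n \<and> \<mu> \<le> d i}"
proof (rule ccontr)
  assume "\<not> 2 \<le> card {i. i < n \<and> \<mu> \<le> d i}"
  hence "card {i. i < n \<and> \<mu> \<le> d i} \<le> Suc 0" by simp
  hence pairwise: "\<And>i i'. i < n \<Longrightarrow> \<mu> \<le> d i \<Longrightarrow> i' < n \<Longrightarrow> \<mu> \<le> d i' \<Longrightarrow> i = i'"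
    by (subst (asm) card_le_Suc0_iff_eq) auto
  obtain j where unique: "\<And>i. i < n \<Longrightarrow> \<mu> \<le> d i \<Longrightarrow> i = j"
  proof (cases "\<exists>j<n. \<mu> \<le> d j")
    case True
    thus ?thesis using that pairwise by blast
  qed (use that in blast)
  \<comment> \<open>a combination orthogonal to the eigenvector of \<open>d j\<close> lies in the span of eigenvalues \<open>< \<mu>\<close>\<close>
  obtain \<alpha> \<beta> where ab: "\<alpha> \<noteq> 0 \<or> \<beta> \<noteq> 0"
    and orth: "(\<Sum>r<n. p r j * (\<alpha> * w1 r + \<beta> * w2 r)) = 0"
    by (rule exists_combination_orthogonal)
  define x where "x r = \<alpha> * w1 r + \<beta> * w2 r" for r
  obtain c where c: "\<forall>r<n. x r = (\<Sum>i<n. p r i * c i)" using spanning by blast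
  have "c i = 0" if i: "i < n" "\<mu> \<le> d i" for i
  proof -
    have other: "c l * gram i l = 0" if "l < n" "l \<noteq> i" for l
    proof -
      have "\<not> \<mu> \<le> d l" using unique[of l] unique[OF i] that by auto
      hence "d i \<noteq> d l" using i by auto
      thus ?thesis using gram_eq_0 i that by simp
    qed
    have "0 = (\<Sum>r<n. p r i * (\<Sum>l<n. p r l * c l))"
      using orth c unique[OF i] unfolding x_def by simp
    also have "\<dots> = (\<Sum>l<n. c l * gram i l)" by (rule inner_combination)
    also have "\<dots> = (\<Sum>l\<in>{i}. c l * gram i l)"
      using other i by (intro sum.mono_neutral_right) auto
    finally show ?thesis using gram_diag_ne_0[OF i(1)] by simp
  qed
  hence low: "\<forall>i<n. \<mu> \<le> d i \<longrightarrow> c i = 0" by blast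
  have "\<exists>r<n. x r \<noteq> 0" using nonzero[OF ab] unfolding x_def .
  hence "(\<Sum>r<n. \<Sum>s<n. x r * a r s * x s) < \<mu> * (\<Sum>r<n. (x r)\<^sup>2)"
    by (rule quadratic_form_less[OF low c])
  with form[of \<alpha> \<beta>] show False unfolding x_def by linarith
qed

end

lemma lambda2_ge_quadratic_form:
  fixes A :: "real mat" and w1 w2 :: "nat \<Rightarrow> real"
  assumes A: "A \<in> carrier_mat n n" and sym: "\<forall>i<n. \<forall>j<n. A $$ (i, j) = A $$ (j, i)"
    and nonzero: "\<And>\<alpha> \<beta>. \<alpha> \<noteq> 0 \<or> \<beta> \<noteq> 0 \<Longrightarrow> \<exists>r<n. \<alpha> * w1 r + \<beta> * w2 r \<noteq> 0"
    and form: "\<And>\<alpha> \<beta>. \<mu> * (\<Sum>r<n. (\<alpha> * w1 r + \<beta> * w2 r)\<^sup>2)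
      \<le> (\<Sum>r<n. \<Sum>s<n. (\<alpha> * w1 r + \<beta> * w2 r) * A $$ (r, s) * (\<alpha> * w1 s + \<beta> * w2 s))"
  shows "\<mu> \<le> lambda2 A"
proof -
  obtain ds P Q where ds: "length ds = n" "char_poly A = (\<Prod>a\<leftarrow>ds. [:-a, 1:])"
    and P: "P \<in> carrier_mat n n" and Q: "Q \<in> carrier_mat n n"
    and PQ: "P * Q = 1\<^sub>m n" and QP: "Q * P = 1\<^sub>m n"
    and eig: "\<forall>i<n. \<forall>r<n. (\<Sum>j<n. A $$ (r, j) * P $$ (j, i)) = ds ! i * P $$ (r, i)"
    by (rule sym_mat_diagonalizable[OF A sym])
  interpret real_eigenbasis n "\<lambda>r s. A $$ (r, s)" "\<lambda>r i. P $$ (r, i)" "\<lambda>i. ds ! i"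
  proof
    show "\<And>x. \<exists>c. \<forall>r<n. x r = (\<Sum>i<n. P $$ (r, i) * c i)"
      by (rule mat_right_inverse_columns_span[OF P Q PQ])
    show "\<And>c. \<forall>r<n. (\<Sum>i<n. P $$ (r, i) * c i) = 0 \<Longrightarrow> \<forall>i<n. c i = 0"
      by (rule mat_left_inverse_columns_independent[OF P Q QP])
  qed (use sym eig in auto)
  have "2 \<le> card {i. i < n \<and> \<mu> \<le> ds ! i}"
    using two_eigenvalues_ge[OF nonzero form] .
  thus ?thesis using lambda2_ge[OF ds(2)] ds(1) by simp
qed

lemma two_variable_quadratic_bound:
  fixes k d m n e \<alpha> \<beta> :: real
  assumes n: "0 < n" and m: "0 \<le> m" and k: "0 \<le> k" and dk: "d \<le> k" and kmd: "k * m \<le> d * n" and e: "m * d \<le> e"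
  shows "(d - k * m / n) * (\<alpha>\<^sup>2 * n + 2 * \<alpha> * \<beta> * m + \<beta>\<^sup>2 * m)
    \<le> \<alpha>\<^sup>2 * (k * n) + 2 * \<alpha> * \<beta> * (k * m) + \<beta>\<^sup>2 * e"
proof -
  define t where "t = m / n"
  have mt: "m = t * n" unfolding t_def using n by simp
  have t: "0 \<le> t" "k * t \<le> d" using m n kmd unfolding t_def by (auto simp: field_simps)
  have kt: "k * m / n = k * t" unfolding t_def by simp
  have "\<alpha>\<^sup>2 * (k * n) + 2 * \<alpha> * \<beta> * (k * m) + \<beta>\<^sup>2 * (m * d)
      - (d - k * t) * (\<alpha>\<^sup>2 * n + 2 * \<alpha> * \<beta> * m + \<beta>\<^sup>2 * m)
    = (k - d + k * t) * n * (\<alpha> + \<beta> * t)\<^sup>2 + \<beta>\<^sup>2 * m * t * (d - k * t)"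
    unfolding mt by (simp add: power2_eq_square algebra_simps)
  moreover have "0 \<le> (k - d + k * t) * n * (\<alpha> + \<beta> * t)\<^sup>2"
    using k dk t n by (intro mult_nonneg_nonneg) auto
  moreover have "0 \<le> \<beta>\<^sup>2 * m * t * (d - k * t)" using m t by (intro mult_nonneg_nonneg) auto
  moreover have "\<beta>\<^sup>2 * (m * d) \<le> \<beta>\<^sup>2 * e" using e by (simp add: mult_left_mono)
  ultimately show ?thesis unfolding kt by linarith
qed

lemma sum_indicator_mult:
  fixes n :: nat and g :: "nat \<Rightarrow> real"
  assumes "S \<subseteq> {..<n}"
  shows "(\<Sum>r<n. of_bool (r \<in> S) * g r) = (\<Sum>r\<in>S. g r)"
proof -
  have S: "{..<n} \<inter> S = S" using assms by auto
  show ?thesis by (simp only: sum_of_bool_mult_eq finite_lessThan Collect_mem_eq S)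
qed

lemma sum_squares_ones_indicator:
  fixes n :: nat and \<alpha> \<beta> :: real
  assumes S: "S \<subseteq> {..<n}"
  shows "(\<Sum>r<n. (\<alpha> * 1 + \<beta> * of_bool (r \<in> S))\<^sup>2)
    = \<alpha>\<^sup>2 * n + 2 * \<alpha> * \<beta> * card S + \<beta>\<^sup>2 * (card S :: real)"
proof -
  have "(\<Sum>r<n. (\<alpha> * 1 + \<beta> * of_bool (r \<in> S))\<^sup>2)
      = (\<Sum>r<n. \<alpha>\<^sup>2 + (2 * \<alpha> * \<beta> + \<beta>\<^sup>2) * of_bool (r \<in> S))"
    by (intro sum.cong refl) (simp add: power2_eq_square algebra_simps)
  also have "\<dots> = \<alpha>\<^sup>2 * n + (2 * \<alpha> * \<beta> + \<beta>\<^sup>2) * (\<Sum>r<n. of_bool (r \<in> S) * 1)"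
    by (simp add: sum.distrib sum_distrib_left)
  also have "(\<Sum>r<n. of_bool (r \<in> S) * 1) = (card S :: real)"
    using sum_indicator_mult[OF S, of "\<lambda>_. 1"] by simp
  finally show ?thesis by (simp add: algebra_simps)
qed

lemma quadratic_form_ones_indicator:
  fixes A :: "real mat" and k :: real
  assumes sym: "\<forall>i<n. \<forall>j<n. A $$ (i, j) = A $$ (j, i)"
    and row: "\<And>r. r < n \<Longrightarrow> (\<Sum>s<n. A $$ (r, s)) = k"
    and S: "S \<subseteq> {..<n}"
  shows "(\<Sum>r<n. \<Sum>s<n. (\<alpha> * 1 + \<beta> * of_bool (r \<in> S)) * A $$ (r, s) * (\<alpha> * 1 + \<beta> * of_bool (s \<in> S)))
    = \<alpha>\<^sup>2 * (k * n) + 2 * \<alpha> * \<beta> * (k * card S) + \<beta>\<^sup>2 * (\<Sum>r\<in>S. \<Sum>s\<in>S. A $$ (r, s))"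
proof -
  define \<chi> where "\<chi> r = (of_bool (r \<in> S) :: real)" for r
  define x where "x r = \<alpha> * 1 + \<beta> * \<chi> r" for r
  define a where "a r = (\<Sum>s\<in>S. A $$ (r, s))" for r
  have sum_\<chi>: "(\<Sum>r<n. \<chi> r * g r) = (\<Sum>r\<in>S. g r)" for g
    unfolding \<chi>_def by (rule sum_indicator_mult[OF S])
  have col: "(\<Sum>r<n. A $$ (r, s)) = k" if "s < n" for s
  proof -
    have "(\<Sum>r<n. A $$ (r, s)) = (\<Sum>r<n. A $$ (s, r))" using sym that by (intro sum.cong refl) simp
    thus ?thesis using row[OF that] by simp
  qed
  have sum_a: "(\<Sum>r<n. a r) = k * card S"
  proof -
    have "(\<Sum>r<n. a r) = (\<Sum>s\<in>S. \<Sum>r<n. A $$ (r, s))" unfolding a_def by (rule sum.swap)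
    also have "\<dots> = (\<Sum>s\<in>S. k)" using col S by (intro sum.cong refl) auto
    finally show ?thesis by simp
  qed
  have image: "(\<Sum>s<n. A $$ (r, s) * x s) = \<alpha> * k + \<beta> * a r" if "r < n" for r
  proof -
    have "(\<Sum>s<n. A $$ (r, s) * x s) = \<alpha> * (\<Sum>s<n. A $$ (r, s)) + \<beta> * (\<Sum>s<n. \<chi> s * A $$ (r, s))"
      unfolding x_def by (simp add: sum.distrib sum_distrib_left distrib_left mult_ac)
    thus ?thesis using row[OF that] sum_\<chi> unfolding a_def by simp
  qed
  have "(\<Sum>r<n. \<Sum>s<n. x r * A $$ (r, s) * x s) = (\<Sum>r<n. x r * (\<Sum>s<n. A $$ (r, s) * x s))"
    by (simp add: sum_distrib_left mult.assoc)
  also have "\<dots> = (\<Sum>r<n. x r * (\<alpha> * k + \<beta> * a r))"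
    using image by simp
  also have "\<dots> = (\<Sum>r<n. \<alpha> * \<alpha> * k + \<alpha> * \<beta> * a r + \<alpha> * \<beta> * k * \<chi> r + \<beta> * \<beta> * (\<chi> r * a r))"
    unfolding x_def by (intro sum.cong refl) (simp add: algebra_simps)
  also have "\<dots> = \<alpha> * \<alpha> * k * n + \<alpha> * \<beta> * (\<Sum>r<n. a r) + \<alpha> * \<beta> * k * (\<Sum>r<n. \<chi> r)
      + \<beta> * \<beta> * (\<Sum>r<n. \<chi> r * a r)"
    by (simp add: sum.distrib sum_distrib_left)
  also have "\<dots> = \<alpha>\<^sup>2 * (k * n) + 2 * \<alpha> * \<beta> * (k * card S) + \<beta>\<^sup>2 * (\<Sum>r\<in>S. a r)"
    using sum_a sum_\<chi>[of a] sum_\<chi>[of "\<lambda>_. 1"] by (simp add: power2_eq_square algebra_simps)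
  finally show ?thesis unfolding x_def \<chi>_def a_def .
qed

lemma lambda2_ge_dense_subset:
  fixes A :: "real mat" and k d :: real
  assumes A: "A \<in> carrier_mat n n" and sym: "\<forall>i<n. \<forall>j<n. A $$ (i, j) = A $$ (j, i)"
    and row: "\<And>r. r < n \<Longrightarrow> (\<Sum>s<n. A $$ (r, s)) = k"
    and S: "S \<subseteq> {..<n}" "S \<noteq> {}" "S \<noteq> {..<n}"
    and dense: "card S * d \<le> (\<Sum>r\<in>S. \<Sum>s\<in>S. A $$ (r, s))"
    and k: "0 \<le> k" and dk: "d \<le> k" and kSd: "k * card S \<le> d * n"
  shows "d - k * card S / n \<le> lambda2 A"
proof (rule lambda2_ge_quadratic_form[OF A sym])
  show "\<exists>r<n. \<alpha> * 1 + \<beta> * of_bool (r \<in> S) \<noteq> 0" if "\<alpha> \<noteq> 0 \<or> \<beta> \<noteq> 0" for \<alpha> \<beta> :: real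
  proof (cases "\<alpha> = 0")
    case True
    obtain v where "v \<in> S" using S(2) by blast
    thus ?thesis using True that S(1) by auto
  next
    case False
    obtain u where "u < n" "u \<notin> S" using S(1,3) by blast
    thus ?thesis using False by auto
  qed
  have "0 < n" using S(1,2) by auto
  thus "(d - k * card S / n) * (\<Sum>r<n. (\<alpha> * 1 + \<beta> * of_bool (r \<in> S))\<^sup>2)
    \<le> (\<Sum>r<n. \<Sum>s<n. (\<alpha> * 1 + \<beta> * of_bool (r \<in> S)) * A $$ (r, s) * (\<alpha> * 1 + \<beta> * of_bool (s \<in> S)))"
    for \<alpha> \<beta> :: real
    using two_variable_quadratic_bound[of n "card S" k d "\<Sum>r\<in>S. \<Sum>s\<in>S. A $$ (r, s)" \<alpha> \<beta>]
      k dk kSd dense sum_squares_ones_indicator[OF S(1)] quadratic_form_ones_indicator[OF sym row S(1)]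
    by (simp add: mult.commute)
qed

section \<open>Automorphisms of regular graphs\<close>

lemma adj_matrix_carrier: "adj_matrix n E \<in> carrier_mat n n"
  unfolding adj_matrix_def by simp

lemma adj_matrix_index:
  "i < n \<Longrightarrow> j < n \<Longrightarrow> adj_matrix n E $$ (i, j) = of_bool (E i j)"
  unfolding adj_matrix_def by simp

lemma adj_matrix_symmetric:
  assumes "simple_graph n E"
  shows "\<forall>i<n. \<forall>j<n. adj_matrix n E $$ (i, j) = adj_matrix n E $$ (j, i)"
  using assms unfolding simple_graph_def by (auto simp: adj_matrix_index)

lemma adj_matrix_sum_row_subset:
  assumes "S \<subseteq> {..<n}" "r < n"
  shows "(\<Sum>s\<in>S. adj_matrix n E $$ (r, s)) = real (card {s \<in> S. E r s})"
proof -
  have "(\<Sum>s\<in>S. adj_matrix n E $$ (r, s)) = (\<Sum>s\<in>S. of_bool (E r s))"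
    using assms by (intro sum.cong refl) (auto simp: adj_matrix_index)
  also have "\<dots> = real (card {s \<in> S. E r s})"
    using assms finite_subset[OF assms(1)] by (simp add: Int_def)
  finally show ?thesis .
qed

lemma adj_matrix_row_sum:
  assumes "regular n E k" "r < n"
  shows "(\<Sum>s<n. adj_matrix n E $$ (r, s)) = real k"
  using adj_matrix_sum_row_subset[of "{..<n}" n r E] assms
  unfolding regular_def neighbours_def by simp

lemma automorphism_moved_neighbours:
  assumes reg: "regular n E k"
    and common: "\<forall>u<n. \<forall>v<n. u \<noteq> v \<longrightarrow> card (neighbours n E u \<inter> neighbours n E v) \<le> q"
    and aut: "automorphism n E \<sigma>" and r: "r < n" "\<sigma> r \<noteq> r"
  shows "k \<le> card {s \<in> {v. v < n \<and> \<sigma> v \<noteq> v}. E r s} + q"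
proof -
  define M where "M = {s \<in> {v. v < n \<and> \<sigma> v \<noteq> v}. E r s}"
  have \<sigma>r: "\<sigma> r < n" using aut r unfolding automorphism_def bij_betw_def by auto
  have cover: "neighbours n E r \<subseteq> M \<union> (neighbours n E r \<inter> neighbours n E (\<sigma> r))"
  proof
    fix s assume s: "s \<in> neighbours n E r"
    show "s \<in> M \<union> (neighbours n E r \<inter> neighbours n E (\<sigma> r))"
    proof (cases "\<sigma> s = s")
      case True
      have "s < n" "E r s" using s unfolding neighbours_def by auto
      hence "E (\<sigma> r) (\<sigma> s)" using aut r(1) unfolding automorphism_def by blast
      thus ?thesis using s True unfolding neighbours_def by simp
    next
      case False
      thus ?thesis using s unfolding M_def neighbours_def by simp
    qed
  qed
  have "card (neighbours n E r) \<le> card M + card (neighbours n E r \<inter> neighbours n E (\<sigma> r))"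
  proof -
    have "finite (neighbours n E r)" unfolding neighbours_def by simp
    hence "card (neighbours n E r) \<le> card (M \<union> (neighbours n E r \<inter> neighbours n E (\<sigma> r)))"
      using cover by (intro card_mono) (auto simp: M_def neighbours_def)
    also have "\<dots> \<le> card M + card (neighbours n E r \<inter> neighbours n E (\<sigma> r))" by (rule card_Un_le)
    finally show ?thesis .
  qed
  also have "\<dots> \<le> card M + q" using common r \<sigma>r by simp
  finally show ?thesis using reg r unfolding regular_def M_def by simp
qed

lemma moved_vertices_lower_bound:
  assumes G: "simple_graph n E" and reg: "regular n E k"
    and common: "\<forall>u<n. \<forall>v<n. u \<noteq> v \<longrightarrow> card (neighbours n E u \<inter> neighbours n E v) \<le> q"
    and aut: "automorphism n E \<sigma>" and moved: "\<exists>v<n. \<sigma> v \<noteq> v"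
  shows "real k - real q - \<bar>lambda2 (adj_matrix n E)\<bar>
    \<le> real k * card {v. v < n \<and> \<sigma> v \<noteq> v} / real n"
proof -
  define S where "S = {v. v < n \<and> \<sigma> v \<noteq> v}"
  define A where "A = adj_matrix n E"
  have S: "S \<subseteq> {..<n}" "S \<noteq> {}" unfolding S_def using moved by auto
  show ?thesis
  proof (cases "real k - real q \<le> real k * card S / n")
    case True
    thus ?thesis unfolding S_def by simp
  next
    case False
    have "S \<noteq> {..<n}"
    proof
      assume "S = {..<n}"
      hence "real k * card S / n = real k" using S(2) by auto
      with False show False by simp
    qed
    moreover have "card S * (real k - real q) \<le> (\<Sum>r\<in>S. \<Sum>s\<in>S. A $$ (r, s))"
    proof -
      have "card S * (real k - real q) = (\<Sum>r\<in>S. real k - real q)" by simp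
      also have "\<dots> \<le> (\<Sum>r\<in>S. real (card {s \<in> S. E r s}))"
        using automorphism_moved_neighbours[OF reg common aut] S(1)
        by (intro sum_mono) (fastforce simp: S_def)
      also have "\<dots> = (\<Sum>r\<in>S. \<Sum>s\<in>S. A $$ (r, s))"
        using adj_matrix_sum_row_subset[OF S(1)] S(1) unfolding A_def by (intro sum.cong) auto
      finally show ?thesis .
    qed
    moreover have "real k * card S \<le> (real k - real q) * n"
      using False S(1,2) by (auto simp: field_simps)
    ultimately have "real k - real q - real k * card S / n \<le> lambda2 A"
      using lambda2_ge_dense_subset[OF _ _ _ S(1,2)] adj_matrix_carrier adj_matrix_symmetric[OF G]
        adj_matrix_row_sum[OF reg] unfolding A_def by simp
    thus ?thesis unfolding S_def A_def by linarith
  qed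
qed

lemma ereal_le_motion:
  assumes "\<And>\<sigma>. automorphism n E \<sigma> \<Longrightarrow> \<exists>v<n. \<sigma> v \<noteq> v \<Longrightarrow> b \<le> real (card {v. v < n \<and> \<sigma> v \<noteq> v})"
  shows "ereal b \<le> ereal_of_enat (motion n E)"
proof -
  define T where "T = {enat (card {v. v < n \<and> \<sigma> v \<noteq> v}) | \<sigma>. automorphism n E \<sigma> \<and> (\<exists>v<n. \<sigma> v \<noteq> v)}"
  show ?thesis
  proof (cases "T = {}")
    case True
    thus ?thesis unfolding motion_def T_def[symmetric] by (simp add: Inf_enat_def)
  next
    case False
    hence "Inf T \<in> T" unfolding Inf_enat_def by (auto intro: LeastI)
    then obtain \<sigma> where "motion n E = enat (card {v. v < n \<and> \<sigma> v \<noteq> v})"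
      "automorphism n E \<sigma>" "\<exists>v<n. \<sigma> v \<noteq> v"
      unfolding motion_def T_def[symmetric] unfolding T_def by blast
    thus ?thesis using assms by simp
  qed
qed

lemma divide_double_mult_le:
  fixes K k m n :: real
  assumes "0 \<le> k" "0 < n" "0 \<le> m" "K \<le> k * m / n"
  shows "K / (2 * k) * n \<le> m"
proof (cases "K \<le> 0 \<or> k = 0")
  case True
  hence "K / (2 * k) \<le> 0" using assms(1) by (cases "k = 0") (auto intro: divide_nonpos_nonneg)
  hence "K / (2 * k) * n \<le> 0" using assms(2) by (intro mult_nonpos_nonneg) auto
  thus ?thesis using assms(3) by linarith
next
  case False
  hence "K / (2 * k) * n \<le> (k * m / n) / (2 * k) * n"
    using assms by (intro mult_right_mono divide_right_mono) auto
  also have "\<dots> = m / 2" using False assms by (simp add: field_simps)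
  finally show ?thesis using assms by simp
qed

theorem lemma5p1:
  fixes n k q :: nat and E :: "nat \<Rightarrow> nat \<Rightarrow> bool"
  assumes "simple_graph n E"
    and "regular n E k"
    and "balanced_bipartite n E"
    and "\<forall>u<n. \<forall>v<n. u \<noteq> v \<longrightarrow> card (neighbours n E u \<inter> neighbours n E v) \<le> q"
  shows "ereal ((real k - \<bar>lambda2 (adj_matrix n E)\<bar> - real q) / (2 * real k) * real n)
           \<le> ereal_of_enat (motion n E)"
proof (rule ereal_le_motion)
  fix \<sigma> assume aut: "automorphism n E \<sigma>" and moved: "\<exists>v<n. \<sigma> v \<noteq> v"
  hence "0 < real n" by auto
  with moved_vertices_lower_bound[OF assms(1,2,4) aut moved]
  show "(real k - \<bar>lambda2 (adj_matrix n E)\<bar> - real q) / (2 * real k) * real n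
      \<le> real (card {v. v < n \<and> \<sigma> v \<noteq> v})"
    by (intro divide_double_mult_le) auto
qed

end
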